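(* Let $k\geq 8$ and $3k\leq n\leq 4k$ be integers, and let $h(n,k)=\binom{n-1}{k-1}-\binom{n-k-1}{k-1}+1$. Then \[ \binom{n}{k-2}+\frac{h(n,k)^2}{\binom{n}{k-2}}>2\binom{n-1}{k-1}. \] *)

theory Defs
  imports Complex_Main
begin

definition h :: "nat \<Rightarrow> nat \<Rightarrow> real" where
  "h n k = real ((n - 1) choose (k - 1)) - real ((n - k - 1) choose (k - 1)) + 1"

end

theory Submission imports Defs begin

text \<open>Write \<open>a = C(n, k-2)\<close>, \<open>b = C(n-1, k-1)\<close> and \<open>c = C(n-k-1, k-1)\<close>, so that
  \<open>h n k = b - c + 1\<close>; since \<open>c \<le> b\<close>, it suffices to show \<open>2 b c \<le> (b - a)\<^sup>2\<close>.
  The quotient \<open>a / b = n (k-1) / ((n-k+2)(n-k+1))\<close> is explicit, and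
  \<open>c / b \<le> ((n-k-1)/(n-1))\<^bsup>k-1\<^esup>\<close>, which reduces the claim to an inequality between
  explicit functions of \<open>n\<close> and \<open>k\<close>. For \<open>k \<ge> 14\<close> it follows from \<open>a/b \<le> 3/4\<close>
  and \<open>(3/4)\<^bsup>13\<^esup> < 1/32\<close>; the finitely many pairs with \<open>8 \<le> k \<le> 13\<close> are checked
  by computation.\<close>

lemma Suc_times_binomial_Suc: "Suc j * (m choose Suc j) = (m - j) * (m choose j)"
  using binomial_absorption[of j m] binomial_absorb_comp[of m j] by simp

lemma binomial_two_step_identity:
  "(n - j) * (n - 1 - j) * (n choose j) = n * Suc j * ((n - 1) choose Suc j)"
proof -
  have "(n - j) * (n - 1 - j) * (n choose j) = (n - 1 - j) * (n * ((n - 1) choose j))"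
    by (simp add: binomial_absorb_comp)
  also have "\<dots> = n * (Suc j * ((n - 1) choose Suc j))"
    by (simp only: Suc_times_binomial_Suc mult_ac)
  finally show ?thesis by (simp only: mult_ac)
qed

lemma binomial_times_power_le:
  fixes m M j :: nat
  assumes "m \<le> M"
  shows "(m choose j) * M ^ j \<le> (M choose j) * m ^ j"
proof (induction j)
  case 0
  show ?case by simp
next
  case (Suc j)
  have "(m - j) * M = m * M - j * M"
    by (rule diff_mult_distrib)
  also have "\<dots> \<le> m * M - j * m"
    using assms by (intro diff_le_mono2) simp
  also have "\<dots> = (M - j) * m"
    by (simp add: diff_mult_distrib mult.commute[of m M])
  finally have factor: "(m - j) * M \<le> (M - j) * m" .
  have step: "Suc j * ((x choose Suc j) * y ^ Suc j) = ((x choose j) * y ^ j) * ((x - j) * y)"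
    for x y :: nat
    by (metis Suc_times_binomial_Suc power_Suc mult.assoc mult.commute)
  have "Suc j * ((m choose Suc j) * M ^ Suc j) \<le> Suc j * ((M choose Suc j) * m ^ Suc j)"
    unfolding step using Suc.IH factor by (rule mult_mono) simp_all
  then show ?case by (simp only: Suc_mult_le_cancel1)
qed

lemma power_ratio_bound_large_k:
  fixes n k :: nat
  assumes "14 \<le> k" "3 * k \<le> n" "n \<le> 4 * k"
  shows "2 * (real n - real k - 1) ^ (k - 1) * ((real n - real k + 2) * (real n - real k + 1))\<^sup>2
    \<le> ((real n - real k + 2) * (real n - real k + 1) - real n * (real k - 1))\<^sup>2 * (real n - 1) ^ (k - 1)"
proof -
  define D where "D = (real n - real k + 2) * (real n - real k + 1)"
  define M where "M = (real n - 1) ^ (k - 1)"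
  have "0 \<le> (3 * (real n - real k) + 2 * real k) * (real n - 3 * real k)"
    using assms by simp
  then have "4 * (real n * (real k - 1)) \<le> 3 * D"
    unfolding D_def using assms by (simp add: algebra_simps)
  then have E: "D / 4 \<le> D - real n * (real k - 1)"
    by linarith
  have "(real n - real k - 1) ^ (k - 1) \<le> (3/4 * (real n - 1)) ^ (k - 1)"
    using assms by (intro power_mono) auto
  also have "\<dots> = (3/4) ^ (k - 1) * M"
    unfolding M_def by (rule power_mult_distrib)
  also have "\<dots> \<le> 1/32 * M"
  proof (rule mult_right_mono)
    have "(3/4::real) ^ (k - 1) \<le> (3/4) ^ 13"
      using assms by (intro power_decreasing) auto
    also have "\<dots> \<le> 1/32"
      by (simp add: power_divide)
    finally show "(3/4::real) ^ (k - 1) \<le> 1/32" .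
  qed (use assms in \<open>simp add: M_def\<close>)
  finally have P: "(real n - real k - 1) ^ (k - 1) \<le> M / 32"
    by simp
  have "2 * (real n - real k - 1) ^ (k - 1) * D\<^sup>2 \<le> 2 * (M / 32) * D\<^sup>2"
    using P by (intro mult_right_mono) auto
  also have "\<dots> = (D / 4)\<^sup>2 * M"
    by (simp add: power_divide)
  also have "\<dots> \<le> (D - real n * (real k - 1))\<^sup>2 * M"
    using E assms by (intro mult_right_mono power_mono) (auto simp: D_def M_def)
  finally show ?thesis
    unfolding D_def M_def .
qed

lemma power_ratio_bound_small_k:
  fixes n k :: nat
  assumes "8 \<le> k" "k \<le> 13" "3 * k \<le> n" "n \<le> 4 * k"
  shows "2 * (real n - real k - 1) ^ (k - 1) * ((real n - real k + 2) * (real n - real k + 1))\<^sup>2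
    \<le> ((real n - real k + 2) * (real n - real k + 1) - real n * (real k - 1))\<^sup>2 * (real n - 1) ^ (k - 1)"
proof -
  \<comment> \<open>\<open>set_upt\<close> would turn the inner list into an interval that \<open>simp\<close> cannot enumerate.\<close>
  have "\<forall>k \<in> set [8..<14]. \<forall>n \<in> set [3 * k..<4 * k + 1].
    2 * (real n - real k - 1) ^ (k - 1) * ((real n - real k + 2) * (real n - real k + 1))\<^sup>2
    \<le> ((real n - real k + 2) * (real n - real k + 1) - real n * (real k - 1))\<^sup>2 * (real n - 1) ^ (k - 1)"
    by (simp del: set_upt)
  moreover have "k \<in> set [8..<14]" "n \<in> set [3 * k..<4 * k + 1]"
    using assms by auto
  ultimately show ?thesis
    by blast
qed

lemma two_binomial_product_le_square_diff:
  fixes n k :: nat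
  assumes "8 \<le> k" "3 * k \<le> n" "n \<le> 4 * k"
  shows "2 * real ((n - 1) choose (k - 1)) * real ((n - k - 1) choose (k - 1))
    \<le> (real ((n - 1) choose (k - 1)) - real (n choose (k - 2)))\<^sup>2"
proof -
  define a where "a = real (n choose (k - 2))"
  define b where "b = real ((n - 1) choose (k - 1))"
  define c where "c = real ((n - k - 1) choose (k - 1))"
  define D where "D = (real n - real k + 2) * (real n - real k + 1)"
  define E where "E = D - real n * (real k - 1)"
  define P where "P = (real n - real k - 1) ^ (k - 1)"
  define M where "M = (real n - 1) ^ (k - 1)"
  have "D > 0" "M > 0" "b \<ge> 0"
    using assms by (auto simp: D_def M_def b_def)
  have casts: "Suc (k - 2) = k - 1" "real (k - 1) = real k - 1"
      "real (n - (k - 2)) = real n - real k + 2" "real (n - 1 - (k - 2)) = real n - real k + 1"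
    using assms by (simp_all add: of_nat_diff)
  have "real ((n - (k - 2)) * (n - 1 - (k - 2)) * (n choose (k - 2)))
      = real (n * Suc (k - 2) * ((n - 1) choose Suc (k - 2)))"
    by (simp only: binomial_two_step_identity)
  then have "a * D = real n * (real k - 1) * b"
    unfolding of_nat_mult casts a_def b_def D_def by (simp only: ac_simps)
  then have ab: "(b - a) * D = b * E"
    by (simp add: E_def algebra_simps)
  have "real (((n - k - 1) choose (k - 1)) * (n - 1) ^ (k - 1))
      \<le> real (((n - 1) choose (k - 1)) * (n - k - 1) ^ (k - 1))"
    by (intro of_nat_mono binomial_times_power_le) simp
  moreover have "real (n - 1) = real n - 1" "real (n - k - 1) = real n - real k - 1"
    using assms by (simp_all add: of_nat_diff)
  ultimately have cb: "c * M \<le> b * P"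
    unfolding c_def b_def M_def P_def by (simp only: of_nat_mult of_nat_power)
  have est: "2 * P * D\<^sup>2 \<le> E\<^sup>2 * M"
    unfolding P_def D_def E_def M_def
    using assms power_ratio_bound_small_k power_ratio_bound_large_k by (cases "k \<le> 13") simp_all
  have "(2 * b * c) * (D\<^sup>2 * M) = (2 * b * D\<^sup>2) * (c * M)"
    by (simp add: algebra_simps)
  also have "\<dots> \<le> (2 * b * D\<^sup>2) * (b * P)"
    using cb \<open>b \<ge> 0\<close> by (intro mult_left_mono) auto
  also have "\<dots> = b\<^sup>2 * (2 * P * D\<^sup>2)"
    by (simp add: algebra_simps power2_eq_square)
  also have "\<dots> \<le> b\<^sup>2 * (E\<^sup>2 * M)"
    using est by (intro mult_left_mono) auto
  also have "\<dots> = (b - a)\<^sup>2 * (D\<^sup>2 * M)"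
    using ab by (simp add: power_mult_distrib[symmetric] ac_simps)
  finally show ?thesis
    using \<open>D > 0\<close> \<open>M > 0\<close> by (simp add: a_def b_def c_def)
qed

lemma add_square_div_gt_twice:
  fixes a b c :: real
  assumes "0 < a" "0 \<le> c" "c \<le> b" "2 * b * c \<le> (b - a)\<^sup>2"
  shows "2 * b < a + (b - c + 1)\<^sup>2 / a"
proof -
  have "(b - c)\<^sup>2 < (b - c + 1)\<^sup>2"
    using assms by (intro power_strict_mono) auto
  moreover have "a\<^sup>2 + (b - c)\<^sup>2 - 2 * a * b = (b - a)\<^sup>2 - 2 * b * c + c\<^sup>2"
    by (simp add: power2_eq_square algebra_simps)
  moreover have "0 \<le> c\<^sup>2"
    by simp
  ultimately have "2 * a * b < a\<^sup>2 + (b - c + 1)\<^sup>2"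
    using assms(4) by linarith
  then show ?thesis
    using assms(1) by (simp add: field_simps power2_eq_square)
qed

theorem lemma2p10:
  fixes n k :: nat
  assumes "k \<ge> 8" and "3 * k \<le> n" and "n \<le> 4 * k"
  shows "real (n choose (k - 2)) + (h n k)^2 / real (n choose (k - 2))
           > 2 * real ((n - 1) choose (k - 1))"
proof -
  have "0 < real (n choose (k - 2))"
    using assms by simp
  moreover have "(n - k - 1) choose (k - 1) \<le> (n - 1) choose (k - 1)"
    by (rule binomial_right_mono) simp
  ultimately show ?thesis
    unfolding h_def using two_binomial_product_le_square_diff[OF assms] by (intro add_square_div_gt_twice) auto
qed

end
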